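(* For each $\ell\in\{1,\dots,N\}$, \[\mathrm{mR}(\lambda^{k^*_\ell}_\ell)\le\mathcal{O}\big(|V|^{(|V|+3)\cdot(|\Pi\setminus J_\ell|+2)}\big)\quad\text{and}\quad \mathrm{mR}(\lambda^{k^*_\ell}_{\ge\ell})\le\mathcal{O}\big(|V|^{(|V|+3)\cdot(|\Pi|+2)}\big).\] In particular $\mathrm{mR}(\lambda^* )\le\mathcal{O}\big(|V|^{(|V|+3)\cdot(|\Pi|+2)}\big)$.
   Context: Let $\mathcal{G}$ be a quantitative reachability game on an arena $G=(\Pi,V,(V_i)_{i\in\Pi},E)$ (finite player set $\Pi$, finite vertex set $V$ with $|V|\ge 2$ and $|\Pi|\le|V|$, partition $(V_i)$, every vertex has a successor) with target sets $F_i\subseteq V$ and costs $\mathrm{Cost}_i(\rho)=$ least $k$ with $\rho_k\in F_i$ (or $+\infty$), and let $v_0\in V$. Extended game: arena $X$ with vertices $V^X=V\times2^\Pi$, edges $((v,I),(v',I'))$ iff $(v,v')\in E$ and $I'=I\cup\{i: v'\in F_i\}$, $(v,I)\in V^X_i$ iff $v\in V_i$, targets $F^X_i=\{(v,I):i\in I\}$, costs $\mathrm{Cost}_i$ (reachability cost w.r.t. $F^X_i$); $x_0=(v_0,\{i:v_0\in F_i\})$. $I(u)$ is the second component of $u\in V^X$. $\mathcal{I}$ is the set of sets $I$ such that some $(v,I)$ is reachable from $x_0$, $N=|\mathcal{I}|$, and $J_1<\dots<J_N$ is a fixed total order of $\mathcal{I}$ extending the partial order $I<I'$ iff $I\neq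 I'$ and some $(v',I')$ is reachable from some $(v,I)$. $V^{J_n}=\{(v,J_n):v\in V\}$, $V^{\ge J_n}=\bigcup_{m\ge n}V^{J_m}$. Labelings: for $\lambda:V^X\to\mathbb{N}\cup\{+\infty\}$, a play $\rho$ of $X$ is $\lambda$-consistent if $\mathrm{Cost}_i(\rho_{\ge n})\le\lambda(\rho_n)$ whenever $\rho_n\in V^X_i$. $\lambda^0(u)=0$ if $u\in V^X_i$ and $i\in I(u)$, $+\infty$ otherwise. The update of $\lambda^k$ w.r.t. $V^{\ge J_n}$ keeps $\lambda^k$ outside $V^{\ge J_n}$ and, for $u\in V^{\ge J_n}\cap V^X_i$, sets $\lambda^{k+1}(u)=0$ if $i\in I(u)$ and otherwise $1+\min_{(u,u')\in E^X}\sup\{\mathrm{Cost}_i(\rho):\rho \text{ a } \lambda^k\text{-consistent play from } u'\}$ (with $1+(+\infty)=+\infty$). The sequence $(\lambda^k)$ is generated with $n_0=N$, $\lambda^{k+1}=$ update of $\lambda^k$ w.r.t. $V^{\ge J_{n_k}}$, $n_{k+1}=n_k-1$ if $\lambda^{k+1}=\lambda^k$ and $n_k>1$, else $n_{k+1}=n_k$. Let $k^*_N=0$ and, for $\ell<N$, $k^*_\ell$ be the least $k>k^*_{\ell+1}$ with $\lambda^{k+1}=\lambda^k$ (these are finite); $\lambda^*=\lambda^{k^*_1}$, which satisfies $\lambda^{k^*_1+m}=\lambda^*$ for all $m$. Maximal finite range: for a function $f$ with values in $\mathbb{N}\cup\{+\infty\}$, $\mathrm{mR}(f)$ is the maximum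 of its finite values, and $0$ if it has none. For a labeling $\lambda$, $\lambda_n$ and $\lambda_{\ge n}$ denote its restrictions to $V^{J_n}$ and $V^{\ge J_n}$ (so $\mathrm{mR}(\lambda_n)=0$ when $J_n$ is a bottom region). The $\mathcal{O}$ is with respect to the game parameters $|V|,|\Pi|$. *)

theory Defs
  imports Complex_Main "HOL-Library.Extended_Nat"
begin

text \<open>Quantitative reachability games. Vertices and players are natural numbers,
  so that the hidden constant of the O-bound is uniform over all games.\<close>

record rgame =
  Vs  :: "nat set"
  Ps  :: "nat set"
  own :: "nat \<Rightarrow> nat"         (* v \<in> V_i iff own v = i *)
  Es  :: "(nat \<times> nat) set"
  Fs  :: "nat \<Rightarrow> nat set"

definition arena :: "rgame \<Rightarrow> bool" where
  "arena G \<longleftrightarrow> finite (Vs G) \<and> finite (Ps G) \<and> card (Vs G) \<ge> 2 \<and> card (Ps G) \<le> card (Vs G)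
     \<and> Es G \<subseteq> Vs G \<times> Vs G \<and> (\<forall>v\<in>Vs G. \<exists>v'. (v, v') \<in> Es G)
     \<and> (\<forall>v\<in>Vs G. own G v \<in> Ps G) \<and> (\<forall>i\<in>Ps G. Fs G i \<subseteq> Vs G)"

type_synonym xv = "nat \<times> nat set"

definition XV :: "rgame \<Rightarrow> xv set" where
  "XV G = Vs G \<times> Pow (Ps G)"

definition XE :: "rgame \<Rightarrow> (xv \<times> xv) set" where
  "XE G = {((v, I), (v', I')). (v, v') \<in> Es G \<and> I \<subseteq> Ps G \<and> I' = I \<union> {i \<in> Ps G. v' \<in> Fs G i}}"

definition x0 :: "rgame \<Rightarrow> nat \<Rightarrow> xv" where
  "x0 G v0 = (v0, {i \<in> Ps G. v0 \<in> Fs G i})"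

definition Iset :: "rgame \<Rightarrow> nat \<Rightarrow> nat set set" where
  "Iset G v0 = snd ` {u. (x0 G v0, u) \<in> (XE G)\<^sup>*}"

definition Nreg :: "rgame \<Rightarrow> nat \<Rightarrow> nat" where
  "Nreg G v0 = card (Iset G v0)"

definition regprec :: "rgame \<Rightarrow> nat set \<Rightarrow> nat set \<Rightarrow> bool" where
  "regprec G I I' \<longleftrightarrow> I \<noteq> I' \<and> (\<exists>v v'. ((v, I), (v', I')) \<in> (XE G)\<^sup>*)"

definition order_ok :: "rgame \<Rightarrow> nat \<Rightarrow> (nat \<Rightarrow> nat set) \<Rightarrow> bool" where
  "order_ok G v0 J \<longleftrightarrow> bij_betw J {1..Nreg G v0} (Iset G v0)
     \<and> (\<forall>m\<in>{1..Nreg G v0}. \<forall>n\<in>{1..Nreg G v0}. regprec G (J m) (J n) \<longrightarrow> m < n)"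

definition VJ :: "rgame \<Rightarrow> (nat \<Rightarrow> nat set) \<Rightarrow> nat \<Rightarrow> xv set" where
  "VJ G J n = Vs G \<times> {J n}"

definition Vge :: "rgame \<Rightarrow> nat \<Rightarrow> (nat \<Rightarrow> nat set) \<Rightarrow> nat \<Rightarrow> xv set" where
  "Vge G v0 J n = (\<Union>m\<in>{n..Nreg G v0}. VJ G J m)"

definition play :: "rgame \<Rightarrow> (nat \<Rightarrow> xv) \<Rightarrow> bool" where
  "play G \<rho> \<longleftrightarrow> (\<forall>n. (\<rho> n, \<rho> (Suc n)) \<in> XE G)"

definition cost :: "nat \<Rightarrow> (nat \<Rightarrow> xv) \<Rightarrow> enat" where
  "cost i \<rho> = (if \<exists>k. i \<in> snd (\<rho> k) then enat (LEAST k. i \<in> snd (\<rho> k)) else \<infinity>)"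

definition consistent :: "rgame \<Rightarrow> (xv \<Rightarrow> enat) \<Rightarrow> (nat \<Rightarrow> xv) \<Rightarrow> bool" where
  "consistent G lam \<rho> \<longleftrightarrow> play G \<rho> \<and>
     (\<forall>n. cost (own G (fst (\<rho> n))) (\<lambda>k. \<rho> (n + k)) \<le> lam (\<rho> n))"

definition lam0 :: "rgame \<Rightarrow> xv \<Rightarrow> enat" where
  "lam0 G u = (if own G (fst u) \<in> snd u then 0 else \<infinity>)"

definition upd :: "rgame \<Rightarrow> (xv \<Rightarrow> enat) \<Rightarrow> xv set \<Rightarrow> xv \<Rightarrow> enat" where
  "upd G lam S u =
    (if u \<in> S then
       (if own G (fst u) \<in> snd u then 0
        else 1 + (INF u'\<in>{u'. (u, u') \<in> XE G}.
                    SUP \<rho>\<in>{\<rho>. consistent G lam \<rho> \<and> \<rho> 0 = u'}. cost (own G (fst u)) \<rho>))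
     else lam u)"

primrec lamseq :: "rgame \<Rightarrow> nat \<Rightarrow> (nat \<Rightarrow> nat set) \<Rightarrow> nat \<Rightarrow> (xv \<Rightarrow> enat) \<times> nat" where
  "lamseq G v0 J 0 = (lam0 G, Nreg G v0)"
| "lamseq G v0 J (Suc k) =
     (let l = fst (lamseq G v0 J k); n = snd (lamseq G v0 J k);
          l' = upd G l (Vge G v0 J n) in
      (l', if l' = l \<and> n > 1 then n - 1 else n))"

definition lam :: "rgame \<Rightarrow> nat \<Rightarrow> (nat \<Rightarrow> nat set) \<Rightarrow> nat \<Rightarrow> xv \<Rightarrow> enat" where
  "lam G v0 J k = fst (lamseq G v0 J k)"

text \<open>kst j = k*_(N-j): k*_N = 0, k*_l = least k > k*_(l+1) with lambda^(k+1) = lambda^k.\<close>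
primrec kst :: "rgame \<Rightarrow> nat \<Rightarrow> (nat \<Rightarrow> nat set) \<Rightarrow> nat \<Rightarrow> nat" where
  "kst G v0 J 0 = 0"
| "kst G v0 J (Suc j) = (LEAST k. kst G v0 J j < k \<and> lam G v0 J (Suc k) = lam G v0 J k)"

definition kstar :: "rgame \<Rightarrow> nat \<Rightarrow> (nat \<Rightarrow> nat set) \<Rightarrow> nat \<Rightarrow> nat" where
  "kstar G v0 J l = kst G v0 J (Nreg G v0 - l)"

definition mR :: "enat set \<Rightarrow> nat" where
  "mR S = (if \<exists>n. enat n \<in> S then Max {n. enat n \<in> S} else 0)"

end

theory Submission
  imports Defs
begin

text \<open>Updates only decrease labels, and a label becomes finite only in an update, where it is one
  more than the worst cost of the consistent plays from some successor. Along such a play the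
  region grows, so at most \<open>|\<Pi>| + 1\<close> regions are visited. Inside one region, the positions at
  which a finite promise is still outstanding lie within \<open>L\<close> steps of the first one, \<open>L\<close> bounding
  the finite labels in use; two other positions never carry the same vertex, since otherwise the
  cycle between them could be repeated forever, giving a consistent play that never reaches the
  target. Hence a new finite label is at most \<open>1 + (|\<Pi>| + 1)(|V| + L)\<close>. Labels of region \<open>I\<close>
  depend only on regions containing \<open>I\<close>, and each region receives at most \<open>|V|\<close> finite labels,
  so by induction on \<open>|\<Pi> - I|\<close> this step is iterated at most \<open>|V| (|\<Pi> - I| + 1)\<close> times,
  which stays below \<open>|V|^((|V|+3)(|\<Pi> - I|+2))\<close>. The bound holds for every labeling of the
  sequence, not only for those with index \<open>k*_\<ell>\<close>.\<close>

section \<open>Updates decrease labels\<close>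

definition upd_value :: "rgame \<Rightarrow> (xv \<Rightarrow> enat) \<Rightarrow> xv \<Rightarrow> enat" where
  "upd_value G lm u = (if own G (fst u) \<in> snd u then 0 else 1 + (INF u'\<in>{u'. (u, u') \<in> XE G}.
      SUP \<rho>\<in>{\<rho>. consistent G lm \<rho> \<and> \<rho> 0 = u'}. cost (own G (fst u)) \<rho>))"

lemma upd_eq: "upd G lm S u = (if u \<in> S then upd_value G lm u else lm u)"
  by (simp add: upd_def upd_value_def)

lemma consistent_mono:
  assumes "\<And>u. lm u \<le> lm' u" and "consistent G lm \<rho>"
  shows "consistent G lm' \<rho>"
  using assms unfolding consistent_def by (meson order_trans)

lemma upd_value_mono:
  assumes "\<And>u. lm u \<le> lm' u"
  shows "upd_value G lm u \<le> upd_value G lm' u"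
proof -
  have "(SUP \<rho>\<in>{\<rho>. consistent G lm \<rho> \<and> \<rho> 0 = u'}. cost i \<rho>)
      \<le> (SUP \<rho>\<in>{\<rho>. consistent G lm' \<rho> \<and> \<rho> 0 = u'}. cost i \<rho>)" for u' i
    by (rule SUP_subset_mono) (auto intro: consistent_mono[OF assms])
  then show ?thesis
    unfolding upd_value_def by (auto intro: add_left_mono INF_mono')
qed

lemma upd_value_le_label:
  assumes l0: "l 0 = lam0 G" and lS: "\<And>t. l (Suc t) = upd G (l t) (S t)"
  shows "upd_value G (l t) u \<le> l t u"
proof (induction t arbitrary: u)
  case 0
  show ?case by (simp add: l0 lam0_def upd_value_def)
next
  case (Suc t)
  have "l (Suc t) u' \<le> l t u'" for u'
    using Suc[of u'] by (simp add: lS upd_eq)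
  then have "upd_value G (l (Suc t)) u \<le> upd_value G (l t) u"
    by (rule upd_value_mono)
  moreover have "l (Suc t) u = (if u \<in> S t then upd_value G (l t) u else l t u)"
    by (simp add: lS upd_eq)
  ultimately show ?case
    using Suc[of u] by (auto split: if_splits)
qed

lemma upd_seq_decreasing:
  assumes "l 0 = lam0 G" and lS: "\<And>t. l (Suc t) = upd G (l t) (S t)"
  shows "l (Suc t) u \<le> l t u"
  using upd_value_le_label[OF assms, of t u] by (simp add: lS upd_eq)

section \<open>Pumping consistent plays\<close>

lemma cost_eq_enat_iff: "cost i \<rho> = enat c \<longleftrightarrow> i \<in> snd (\<rho> c) \<and> (\<forall>k<c. i \<notin> snd (\<rho> k))"
proof
  assume c: "cost i \<rho> = enat c"
  then have ex: "\<exists>k. i \<in> snd (\<rho> k)" and "c = (LEAST k. i \<in> snd (\<rho> k))"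
    unfolding cost_def by (auto split: if_splits)
  then show "i \<in> snd (\<rho> c) \<and> (\<forall>k<c. i \<notin> snd (\<rho> k))"
    using LeastI_ex[OF ex] not_less_Least by auto
next
  assume c: "i \<in> snd (\<rho> c) \<and> (\<forall>k<c. i \<notin> snd (\<rho> k))"
  then have "(LEAST k. i \<in> snd (\<rho> k)) = c"
    by (intro Least_equality) (auto simp: not_less[symmetric])
  then show "cost i \<rho> = enat c" using c unfolding cost_def by auto
qed

lemma cost_eq_infinity_iff: "cost i \<rho> = \<infinity> \<longleftrightarrow> (\<forall>k. i \<notin> snd (\<rho> k))"
  by (simp add: cost_def)

lemma cost_eq_0: "i \<in> snd (\<rho> 0) \<Longrightarrow> cost i \<rho> = 0"
  using cost_eq_enat_iff[of i \<rho> 0] by (simp add: zero_enat_def)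

lemma cost_cong:
  assumes agree: "\<And>d. d \<le> x \<Longrightarrow> \<rho> d = \<rho>' d" and reached: "i \<in> snd (\<rho> x)"
  shows "cost i \<rho> = cost i \<rho>'"
proof -
  obtain c where c: "cost i \<rho> = enat c"
    using reached cost_eq_infinity_iff by (cases "cost i \<rho>") auto
  then have "c \<le> x"
    using reached by (metis cost_eq_enat_iff not_le)
  then have "cost i \<rho>' = enat c"
    using c agree unfolding cost_eq_enat_iff by (metis le_trans less_imp_le_nat order_refl)
  then show ?thesis using c by simp
qed

lemma XE_D:
  assumes "(x, y) \<in> XE G"
  shows "(fst x, fst y) \<in> Es G" and "snd x \<subseteq> Ps G" and "snd y = snd x \<union> {i \<in> Ps G. fst y \<in> Fs G i}"
  using assms by (cases x; cases y; auto simp: XE_def)+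

lemma play_snd_mono:
  assumes "play G \<rho>" and "a \<le> b"
  shows "snd (\<rho> a) \<subseteq> snd (\<rho> b)"
  using assms(2)
proof (induction b rule: dec_induct)
  case (step b)
  have "(\<rho> b, \<rho> (Suc b)) \<in> XE G" using assms(1) by (simp add: play_def)
  then show ?case using step XE_D(3) by blast
qed simp

lemma play_snd_subset: "play G \<rho> \<Longrightarrow> snd (\<rho> k) \<subseteq> Ps G"
  using XE_D(2) unfolding play_def by blast

lemma play_fst_in_Vs: "arena G \<Longrightarrow> play G \<rho> \<Longrightarrow> fst (\<rho> k) \<in> Vs G"
  using XE_D(1) unfolding play_def arena_def by blast

lemma reachable_snd_subset: "(x0 G v0, u) \<in> (XE G)\<^sup>* \<Longrightarrow> snd u \<subseteq> Ps G"
  by (induction rule: rtrancl_induct) (auto simp: x0_def dest: XE_D(3))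

definition lasso :: "(nat \<Rightarrow> 'a) \<Rightarrow> nat \<Rightarrow> nat \<Rightarrow> nat \<Rightarrow> 'a" where
  "lasso \<rho> s s' k = (if k < s then \<rho> k else \<rho> (s + (k - s) mod (s' - s)))"

lemma lasso_eq: "k < s' \<Longrightarrow> lasso \<rho> s s' k = \<rho> k"
  by (simp add: lasso_def)

lemma lasso_in_loop:
  assumes "s < s'" and "s \<le> k"
  shows "\<exists>m. s \<le> m \<and> m < s' \<and> lasso \<rho> s s' k = \<rho> m \<and>
    lasso \<rho> s s' (Suc k) = (if Suc m = s' then \<rho> s else \<rho> (Suc m))"
proof -
  define r where "r = (k - s) mod (s' - s)"
  have "r < s' - s" using assms(1) by (simp add: r_def)
  then have "s + r < s'" by simp
  moreover have "Suc k - s = Suc (k - s)" using assms(2) by simp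
  ultimately show ?thesis
    using assms by (intro exI[of _ "s + r"]) (auto simp: lasso_def mod_Suc r_def)
qed

lemma play_lasso:
  assumes "play G \<rho>" and "s < s'" and "\<rho> s = \<rho> s'"
  shows "play G (lasso \<rho> s s')"
  unfolding play_def
proof
  fix k
  show "(lasso \<rho> s s' k, lasso \<rho> s s' (Suc k)) \<in> XE G"
  proof (cases "k < s")
    case True
    then show ?thesis using assms by (simp add: lasso_eq play_def)
  next
    case False
    then obtain m where "lasso \<rho> s s' k = \<rho> m" "lasso \<rho> s s' (Suc k) = \<rho> (Suc m)"
      using lasso_in_loop[OF assms(2), of k \<rho>] assms(3) by (auto split: if_splits)
    then show ?thesis using assms(1) by (simp add: play_def)
  qed
qed

lemma cost_lasso:
  assumes "s < s'" and "\<And>m. m < s' \<Longrightarrow> i \<notin> snd (\<rho> m)"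
  shows "cost i (lasso \<rho> s s') = \<infinity>"
  unfolding cost_eq_infinity_iff
proof
  fix k
  have "\<exists>m<s'. lasso \<rho> s s' k = \<rho> m"
  proof (cases "k < s")
    case True
    then show ?thesis using assms(1) by (intro exI[of _ k]) (simp add: lasso_eq)
  qed (use lasso_in_loop[OF assms(1), of k \<rho>] in auto)
  then show "i \<notin> snd (lasso \<rho> s s' k)" using assms(2) by auto
qed

text \<open>Consistency constrains only pending positions, so a cycle of \<open>\<rho>\<close> avoiding them can be
  repeated forever.\<close>

definition pending :: "rgame \<Rightarrow> (xv \<Rightarrow> enat) \<Rightarrow> (nat \<Rightarrow> xv) \<Rightarrow> nat \<Rightarrow> bool" where
  "pending G lm \<rho> m \<longleftrightarrow> (\<exists>n\<le>m. lm (\<rho> n) \<noteq> \<infinity> \<and> own G (fst (\<rho> n)) \<notin> snd (\<rho> m))"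

lemma pending_same_region:
  "pending G lm \<rho> m \<Longrightarrow> m \<le> m' \<Longrightarrow> snd (\<rho> m') = snd (\<rho> m) \<Longrightarrow> pending G lm \<rho> m'"
  unfolding pending_def by (metis order_trans)

lemma consistent_lasso:
  assumes cons: "consistent G lm \<rho>" and "s < s'" and "\<rho> s = \<rho> s'"
    and free: "\<And>m. s \<le> m \<Longrightarrow> m < s' \<Longrightarrow> \<not> pending G lm \<rho> m"
  shows "consistent G lm (lasso \<rho> s s')"
  unfolding consistent_def
proof (intro conjI allI)
  show "play G (lasso \<rho> s s')"
    using cons assms(2,3) by (simp add: consistent_def play_lasso)
  fix k
  let ?i = "own G (fst (lasso \<rho> s s' k))"
  show "cost ?i (\<lambda>d. lasso \<rho> s s' (k + d)) \<le> lm (lasso \<rho> s s' k)"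
  proof (cases "k < s")
    case True
    show ?thesis
    proof (cases "lm (\<rho> k) = \<infinity>")
      case False
      then have "own G (fst (\<rho> k)) \<in> snd (\<rho> s)"
        using free[of s] assms(2) True unfolding pending_def by (meson less_imp_le_nat order_refl)
      then have "?i \<in> snd (\<rho> (k + (s - k)))"
        using assms(2) True by (simp add: lasso_eq)
      then have "cost ?i (\<lambda>d. \<rho> (k + d)) = cost ?i (\<lambda>d. lasso \<rho> s s' (k + d))"
        by (intro cost_cong[where x = "s - k"]) (use assms(2) True in \<open>auto simp: lasso_eq\<close>)
      moreover have "cost (own G (fst (\<rho> k))) (\<lambda>d. \<rho> (k + d)) \<le> lm (\<rho> k)"
        using cons by (simp add: consistent_def)
      ultimately show ?thesis
        using True assms(2) by (simp add: lasso_eq)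
    qed (use True assms(2) in \<open>simp add: lasso_eq\<close>)
  next
    case False
    then obtain m where m: "s \<le> m" "m < s'" "lasso \<rho> s s' k = \<rho> m"
      using lasso_in_loop[OF assms(2)] by (meson not_less)
    then have "lm (\<rho> m) = \<infinity> \<or> own G (fst (\<rho> m)) \<in> snd (\<rho> m)"
      using free[OF m(1,2)] unfolding pending_def by blast
    then show ?thesis using m(3) by (auto simp: cost_eq_0)
  qed
qed

lemma repeated_position_pending:
  assumes cons: "consistent G lm \<rho>"
    and finite_cost: "\<And>\<rho>'. consistent G lm \<rho>' \<Longrightarrow> \<rho>' 0 = \<rho> 0 \<Longrightarrow> cost i \<rho>' \<noteq> \<infinity>"
    and cycle: "s < s'" "\<rho> s = \<rho> s'" and unreached: "\<And>m. m < s' \<Longrightarrow> i \<notin> snd (\<rho> m)"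
  shows "\<exists>m. s \<le> m \<and> m < s' \<and> pending G lm \<rho> m"
proof (rule ccontr)
  assume "\<nexists>m. s \<le> m \<and> m < s' \<and> pending G lm \<rho> m"
  then have "consistent G lm (lasso \<rho> s s')"
    using consistent_lasso[OF cons cycle] by blast
  moreover have "lasso \<rho> s s' 0 = \<rho> 0" using cycle by (simp add: lasso_eq)
  moreover have "cost i (lasso \<rho> s s') = \<infinity>"
    using cycle(1) unreached by (rule cost_lasso)
  ultimately show False
    using finite_cost by blast
qed

lemma card_unpending_positions:
  assumes ar: "arena G" and cons: "consistent G lm \<rho>" and cst: "cost i \<rho> = enat c"
    and finite_cost: "\<And>\<rho>'. consistent G lm \<rho>' \<Longrightarrow> \<rho>' 0 = \<rho> 0 \<Longrightarrow> cost i \<rho>' \<noteq> \<infinity>"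
  shows "card {m. m < c \<and> snd (\<rho> m) = r \<and> \<not> pending G lm \<rho> m} \<le> card (Vs G)"
    (is "card ?U \<le> _")
proof -
  have pl: "play G \<rho>" using cons by (simp add: consistent_def)
  have no_repeat: False
    if "m1 \<in> ?U" "m2 \<in> ?U" "m1 < m2" "fst (\<rho> m1) = fst (\<rho> m2)" for m1 m2
  proof -
    have "\<rho> m1 = \<rho> m2" using that by (simp add: prod_eq_iff)
    moreover have "i \<notin> snd (\<rho> m)" if "m < m2" for m
      using cst \<open>m2 \<in> ?U\<close> that by (simp add: cost_eq_enat_iff)
    ultimately obtain m where m: "m1 \<le> m" "m < m2" "pending G lm \<rho> m"
      using repeated_position_pending[OF cons finite_cost \<open>m1 < m2\<close>] by blast
    have "snd (\<rho> m) = r"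
      using play_snd_mono[OF pl m(1)] play_snd_mono[OF pl, of m m2] m(2) that(1,2) by auto
    then have "pending G lm \<rho> m2"
      using pending_same_region[OF m(3) less_imp_le[OF m(2)]] that(2) by simp
    then show False using that(2) by simp
  qed
  have "inj_on (\<lambda>m. fst (\<rho> m)) ?U"
  proof (rule inj_onI)
    fix m1 m2 assume "m1 \<in> ?U" "m2 \<in> ?U" "fst (\<rho> m1) = fst (\<rho> m2)"
    then show "m1 = m2"
      using no_repeat[of m1 m2] no_repeat[of m2 m1] by (cases m1 m2 rule: linorder_cases) auto
  qed
  moreover have "(\<lambda>m. fst (\<rho> m)) ` ?U \<subseteq> Vs G" using play_fst_in_Vs[OF ar pl] by auto
  moreover have "finite (Vs G)" using ar by (simp add: arena_def)
  ultimately show ?thesis by (rule card_inj_on_le)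
qed

text \<open>The promise that makes the first pending position of a region pending is kept within
  \<open>L\<close> steps, and the region is left at that moment.\<close>

lemma pending_positions_window:
  assumes cons: "consistent G lm \<rho>" and bounded: "\<And>k m. lm (\<rho> k) = enat m \<Longrightarrow> m \<le> L"
  shows "\<exists>a. {m. snd (\<rho> m) = r \<and> pending G lm \<rho> m} \<subseteq> {a..<a + L}"
    (is "\<exists>a. ?P \<subseteq> _")
proof (cases "?P = {}")
  case False
  define a where "a = (LEAST m. m \<in> ?P)"
  have "a \<in> ?P" using False LeastI_ex[of "\<lambda>m. m \<in> ?P"] by (auto simp: a_def)
  then obtain n l where n: "n \<le> a" "lm (\<rho> n) = enat l" "own G (fst (\<rho> n)) \<notin> r"
    by (auto simp: pending_def)
  let ?j = "own G (fst (\<rho> n))"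
  have "cost ?j (\<lambda>k. \<rho> (n + k)) \<le> lm (\<rho> n)"
    using cons by (simp add: consistent_def)
  then obtain d where d: "d \<le> l" "?j \<in> snd (\<rho> (n + d))"
    using n(2) by (cases "cost ?j (\<lambda>k. \<rho> (n + k))") (auto simp: cost_eq_enat_iff)
  have "?P \<subseteq> {a..<a + L}"
  proof
    fix x assume x: "x \<in> ?P"
    have "a \<le> x" using x by (simp add: a_def Least_le)
    moreover have "x < n + d"
    proof (rule ccontr)
      assume "\<not> x < n + d"
      then have "snd (\<rho> (n + d)) \<subseteq> snd (\<rho> x)"
        using cons play_snd_mono[of G \<rho> "n + d" x] by (simp add: consistent_def)
      then show False using x d(2) n(3) by auto
    qed
    ultimately show "x \<in> {a..<a + L}" using n(1) d(1) bounded[OF n(2)] by simp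
  qed
  then show ?thesis by blast
qed blast

lemma card_subset_chain_le:
  assumes fin: "finite S" and chain: "subset.chain (Pow S) R"
  shows "card R \<le> card S + 1"
proof -
  have "inj_on card R"
  proof (rule inj_onI)
    fix r1 r2 assume r: "r1 \<in> R" "r2 \<in> R" "card r1 = card r2"
    then have "finite r1" "finite r2" "r1 \<subseteq> r2 \<or> r2 \<subseteq> r1"
      using chain fin finite_subset by (auto simp: subset_chain_def)
    then show "r1 = r2"
      using r(3) card_subset_eq by metis
  qed
  moreover have "card ` R \<subseteq> {0..card S}"
    using chain fin by (auto simp: subset_chain_def card_mono)
  ultimately have "card R \<le> card {0..card S}" by (rule card_inj_on_le) simp
  then show ?thesis by simp
qed

lemma card_play_regions:
  assumes "finite (Ps G)" and pl: "play G \<rho>"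
  shows "card ((\<lambda>k. snd (\<rho> k)) ` A) \<le> card (Ps G) + 1"
proof (rule card_subset_chain_le[OF assms(1)])
  have "snd (\<rho> k) \<subseteq> snd (\<rho> k') \<or> snd (\<rho> k') \<subseteq> snd (\<rho> k)" for k k'
    using play_snd_mono[OF pl] by (cases k k' rule: le_cases) auto
  then show "subset.chain (Pow (Ps G)) ((\<lambda>k. snd (\<rho> k)) ` A)"
    using play_snd_subset[OF pl] unfolding subset_chain_def by blast
qed

lemma consistent_cost_bound:
  assumes ar: "arena G" and cons: "consistent G lm \<rho>" and cst: "cost i \<rho> = enat c"
    and bounded: "\<And>k m. lm (\<rho> k) = enat m \<Longrightarrow> m \<le> L"
    and finite_cost: "\<And>\<rho>'. consistent G lm \<rho>' \<Longrightarrow> \<rho>' 0 = \<rho> 0 \<Longrightarrow> cost i \<rho>' \<noteq> \<infinity>"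
  shows "c \<le> (card (Ps G) + 1) * (card (Vs G) + L)"
proof -
  define R where "R = (\<lambda>k. snd (\<rho> k)) ` {..<c}"
  define M where "M r = {m. m < c \<and> snd (\<rho> m) = r}" for r
  have card_M: "card (M r) \<le> card (Vs G) + L" for r
  proof -
    obtain a where a: "{m. snd (\<rho> m) = r \<and> pending G lm \<rho> m} \<subseteq> {a..<a + L}"
      using pending_positions_window[of G lm \<rho> L r] cons bounded by blast
    let ?U = "{m. m < c \<and> snd (\<rho> m) = r \<and> \<not> pending G lm \<rho> m}"
    have "M r \<subseteq> ?U \<union> {a..<a + L}"
      using a by (auto simp: M_def)
    then have "card (M r) \<le> card (?U \<union> {a..<a + L})"
      by (rule card_mono[rotated]) simp
    also have "\<dots> \<le> card ?U + L"
      using card_Un_le[of ?U "{a..<a + L}"] by simp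
    finally show ?thesis
      using card_unpending_positions[OF ar cons cst finite_cost, of r] by linarith
  qed
  have "{..<c} = (\<Union>r\<in>R. M r)" by (auto simp: R_def M_def)
  then have "c = card (\<Union>r\<in>R. M r)" by (metis card_lessThan)
  also have "\<dots> \<le> (\<Sum>r\<in>R. card (M r))"
    by (rule card_UN_le) (simp add: R_def)
  also have "\<dots> \<le> card R * (card (Vs G) + L)"
    using sum_bounded_above[of R "\<lambda>r. card (M r)"] card_M by simp
  also have "\<dots> \<le> (card (Ps G) + 1) * (card (Vs G) + L)"
  proof (rule mult_right_mono)
    show "card R \<le> card (Ps G) + 1"
      unfolding R_def using ar cons by (intro card_play_regions) (simp_all add: arena_def consistent_def)
  qed simp
  finally show ?thesis .
qed

section \<open>Finite labels are bounded\<close>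

lemma worst_cost_bound:
  assumes ar: "arena G"
    and finite_worst: "(SUP \<rho>\<in>{\<rho>. consistent G lm \<rho> \<and> \<rho> 0 = u}. cost i \<rho>) < \<infinity>"
    and bounded: "\<And>v I m. v \<in> Vs G \<Longrightarrow> snd u \<subseteq> I \<Longrightarrow> I \<subseteq> Ps G \<Longrightarrow> lm (v, I) = enat m \<Longrightarrow> m \<le> L"
  shows "(SUP \<rho>\<in>{\<rho>. consistent G lm \<rho> \<and> \<rho> 0 = u}. cost i \<rho>)
    \<le> enat ((card (Ps G) + 1) * (card (Vs G) + L))"
proof (rule SUP_least)
  fix \<rho> assume "\<rho> \<in> {\<rho>. consistent G lm \<rho> \<and> \<rho> 0 = u}"
  then have cons: "consistent G lm \<rho>" and start: "\<rho> 0 = u" by auto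
  have finite_cost: "cost i \<rho>' \<noteq> \<infinity>" if "consistent G lm \<rho>'" "\<rho>' 0 = \<rho> 0" for \<rho>'
  proof -
    have "cost i \<rho>' \<le> (SUP \<rho>\<in>{\<rho>. consistent G lm \<rho> \<and> \<rho> 0 = u}. cost i \<rho>)"
      by (rule SUP_upper) (use that start in simp)
    then have "cost i \<rho>' < \<infinity>" using finite_worst by (rule order_le_less_trans)
    then show ?thesis by simp
  qed
  then obtain c where c: "cost i \<rho> = enat c"
    using finite_cost[OF cons refl] by (cases "cost i \<rho>") auto
  have pl: "play G \<rho>" using cons by (simp add: consistent_def)
  have bounded_along: "m \<le> L" if "lm (\<rho> k) = enat m" for k m
  proof -
    have "snd u \<subseteq> snd (\<rho> k)" using play_snd_mono[OF pl, of 0 k] start by simp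
    then show ?thesis
      using bounded[of "fst (\<rho> k)" "snd (\<rho> k)" m] that play_snd_subset[OF pl] play_fst_in_Vs[OF ar pl]
      by simp
  qed
  have "c \<le> (card (Ps G) + 1) * (card (Vs G) + L)"
    by (rule consistent_cost_bound[where L = L, OF ar cons c bounded_along finite_cost])
  then show "cost i \<rho> \<le> enat ((card (Ps G) + 1) * (card (Vs G) + L))" using c by simp
qed

definition upd_bound :: "nat \<Rightarrow> nat \<Rightarrow> nat \<Rightarrow> nat" where
  "upd_bound p n L = 1 + (p + 1) * (n + L)"

lemma mono_upd_bound: "mono (upd_bound p n)"
  by (rule monoI) (simp add: upd_bound_def add_mono mult_left_mono)

lemma le_upd_bound: "L \<le> upd_bound p n L"
  by (simp add: upd_bound_def)

lemma upd_bound_funpow_mono: "i \<le> j \<Longrightarrow> x \<le> y \<Longrightarrow> (upd_bound p n ^^ i) x \<le> (upd_bound p n ^^ j) y"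
  by (rule funpow_mono2[OF mono_upd_bound _ _ le_upd_bound])

lemma upd_value_bound:
  assumes ar: "arena G"
    and bounded: "\<And>v' I' m. v' \<in> Vs G \<Longrightarrow> I \<subseteq> I' \<Longrightarrow> I' \<subseteq> Ps G \<Longrightarrow> lm (v', I') = enat m \<Longrightarrow> m \<le> L"
    and val: "upd_value G lm (v, I) = enat m"
  shows "m \<le> upd_bound (card (Ps G)) (card (Vs G)) L"
proof (cases "own G v \<in> I")
  case True
  then show ?thesis using val by (simp add: upd_value_def zero_enat_def)
next
  case owner: False
  define W where "W u' = (SUP \<rho>\<in>{\<rho>. consistent G lm \<rho> \<and> \<rho> 0 = u'}. cost (own G v) \<rho>)" for u'
  have m: "1 + (INF u'\<in>{u'. ((v, I), u') \<in> XE G}. W u') = enat m"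
    using val owner by (simp add: upd_value_def W_def)
  then have "(INF u'\<in>{u'. ((v, I), u') \<in> XE G}. W u') < \<infinity>"
    by (cases "INF u'\<in>{u'. ((v, I), u') \<in> XE G}. W u'") auto
  then have "\<exists>u'\<in>{u'. ((v, I), u') \<in> XE G}. W u' < \<infinity>"
    by (simp only: INF_less_iff)
  then obtain u' where u': "((v, I), u') \<in> XE G" "W u' < \<infinity>"
    by blast
  have "W u' \<le> enat ((card (Ps G) + 1) * (card (Vs G) + L))"
    unfolding W_def
  proof (rule worst_cost_bound[OF ar])
    show "(SUP \<rho>\<in>{\<rho>. consistent G lm \<rho> \<and> \<rho> 0 = u'}. cost (own G v) \<rho>) < \<infinity>"
      using u'(2) by (simp add: W_def)
    have "I \<subseteq> snd u'" using XE_D(3)[OF u'(1)] by simp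
    then show "m \<le> L" if "v' \<in> Vs G" "snd u' \<subseteq> I'" "I' \<subseteq> Ps G" "lm (v', I') = enat m" for v' I' m
      using bounded that by blast
  qed
  moreover have "(INF u'\<in>{u'. ((v, I), u') \<in> XE G}. W u') \<le> W u'"
    by (rule INF_lower) (use u'(1) in simp)
  ultimately have "(INF u'\<in>{u'. ((v, I), u') \<in> XE G}. W u')
      \<le> enat ((card (Ps G) + 1) * (card (Vs G) + L))"
    by (rule order_trans[rotated])
  then show ?thesis
    using m by (cases "INF u'\<in>{u'. ((v, I), u') \<in> XE G}. W u'") (auto simp: upd_bound_def one_enat_def)
qed

lemma region_label_bound:
  assumes ar: "arena G" and l0: "l 0 = lam0 G" and lS: "\<And>t. l (Suc t) = upd G (l t) (S t)"
    and above: "\<And>t v' I' m'. I \<subset> I' \<Longrightarrow> I' \<subseteq> Ps G \<Longrightarrow> v' \<in> Vs G \<Longrightarrow> l t (v', I') = enat m' \<Longrightarrow> m' \<le> B"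
    and "v \<in> Vs G" and "l t (v, I) = enat m"
  shows "m \<le> (upd_bound (card (Ps G)) (card (Vs G)) ^^ card {v \<in> Vs G. l t (v, I) \<noteq> \<infinity>}) B"
  using assms(5,6)
proof (induction t arbitrary: v m)
  case 0
  then show ?case by (simp add: l0 lam0_def zero_enat_def split: if_splits)
next
  case (Suc t)
  let ?g = "upd_bound (card (Ps G)) (card (Vs G))"
  let ?F = "\<lambda>t. {v \<in> Vs G. l t (v, I) \<noteq> \<infinity>}"
  have fin: "finite (?F t')" for t' using ar by (simp add: arena_def)
  have F_mono: "?F t \<subseteq> ?F (Suc t)"
  proof
    fix x assume x: "x \<in> ?F t"
    have "l (Suc t) (x, I) \<le> l t (x, I)" by (rule upd_seq_decreasing[OF l0 lS])
    then show "x \<in> ?F (Suc t)" using x by (cases "l (Suc t) (x, I)") auto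
  qed
  have bounded_now: "m' \<le> (?g ^^ card (?F t)) B"
    if "v' \<in> Vs G" "I \<subseteq> I'" "I' \<subseteq> Ps G" "l t (v', I') = enat m'" for v' I' m'
  proof (cases "I' = I")
    case False
    then have "m' \<le> B" using above[of I' v' t m'] that by blast
    then show ?thesis using upd_bound_funpow_mono[of 0 "card (?F t)" m' B] by simp
  qed (use Suc.IH that in simp)
  show ?case
  proof (cases "l t (v, I) = \<infinity>")
    case False
    then obtain m0 where m0: "l t (v, I) = enat m0" by auto
    have "m \<le> m0" using upd_seq_decreasing[OF l0 lS, of t "(v, I)"] Suc.prems(2) m0 by simp
    also have "m0 \<le> (?g ^^ card (?F t)) B" by (rule Suc.IH[OF Suc.prems(1) m0])
    also have "\<dots> \<le> (?g ^^ card (?F (Suc t))) B"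
      by (intro upd_bound_funpow_mono card_mono fin F_mono order_refl)
    finally show ?thesis .
  next
    case True
    then have "v \<in> ?F (Suc t) - ?F t" using Suc.prems by simp
    then have grows: "card (?F t) < card (?F (Suc t))"
      by (intro psubset_card_mono fin) (use F_mono in blast)
    have val: "upd_value G (l t) (v, I) = enat m"
      using Suc.prems(2) True by (simp add: lS upd_eq split: if_splits)
    have "m \<le> ?g ((?g ^^ card (?F t)) B)"
      by (rule upd_value_bound[OF ar _ val]) (fact bounded_now)
    also have "\<dots> = (?g ^^ Suc (card (?F t))) B" by simp
    also have "\<dots> \<le> (?g ^^ card (?F (Suc t))) B"
      using grows by (intro upd_bound_funpow_mono) simp_all
    finally show ?thesis .
  qed
qed

lemma label_bound:
  assumes ar: "arena G" and l0: "l 0 = lam0 G" and lS: "\<And>t. l (Suc t) = upd G (l t) (S t)"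
  shows "I \<subseteq> Ps G \<Longrightarrow> v \<in> Vs G \<Longrightarrow> l t (v, I) = enat m
    \<Longrightarrow> m \<le> (upd_bound (card (Ps G)) (card (Vs G)) ^^ (card (Vs G) * (card (Ps G - I) + 1))) 0"
proof (induction "card (Ps G - I)" arbitrary: I t v m rule: less_induct)
  case less
  let ?g = "upd_bound (card (Ps G)) (card (Vs G))"
  let ?n = "card (Vs G)"
  let ?B = "(?g ^^ (?n * card (Ps G - I))) 0"
  have fin: "finite (Ps G)" "finite (Vs G)" using ar by (simp_all add: arena_def)
  have above: "m' \<le> ?B"
    if "I \<subset> I'" "I' \<subseteq> Ps G" "v' \<in> Vs G" "l t' (v', I') = enat m'" for t' v' I' m'
  proof -
    have smaller: "card (Ps G - I') < card (Ps G - I)"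
      using that(1,2) less.prems(1) fin by (intro psubset_card_mono) auto
    then have "m' \<le> (?g ^^ (?n * (card (Ps G - I') + 1))) 0"
      using less.hyps that(2-4) by blast
    also have "\<dots> \<le> ?B"
      using smaller by (intro upd_bound_funpow_mono mult_le_mono2) simp_all
    finally show ?thesis .
  qed
  have "m \<le> (?g ^^ card {v \<in> Vs G. l t (v, I) \<noteq> \<infinity>}) ?B"
    by (rule region_label_bound[where B = ?B, OF ar l0 lS above less.prems(2,3)])
  also have "\<dots> \<le> (?g ^^ ?n) ?B"
    using fin by (intro upd_bound_funpow_mono card_mono) auto
  also have "\<dots> = (?g ^^ (?n + ?n * card (Ps G - I))) 0"
    by (simp only: funpow_add o_apply)
  also have "?n + ?n * card (Ps G - I) = ?n * (card (Ps G - I) + 1)"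
    by simp
  finally show ?case .
qed

section \<open>Arithmetic of the bound\<close>

lemma upd_bound_funpow_le: "(upd_bound p n ^^ j) 0 + n + 1 \<le> (p + 2) ^ j * (n + 1)"
proof (induction j)
  case (Suc j)
  define x where "x = (upd_bound p n ^^ j) 0"
  have "upd_bound p n x + n + 1 \<le> (p + 2) * (x + n + 1)"
    by (simp add: upd_bound_def algebra_simps)
  also have "\<dots> \<le> (p + 2) * ((p + 2) ^ j * (n + 1))"
    using Suc by (intro mult_left_mono) (simp_all add: x_def)
  also have "\<dots> = (p + 2) ^ Suc j * (n + 1)"
    by (simp only: power_Suc mult.assoc)
  finally show ?case by (simp only: x_def funpow.simps(2) o_apply)
qed simp

text \<open>Via \<open>(1 + 2/n)^n \<le> e^2 \<le> n^3\<close> for \<open>n \<ge> 3\<close>.\<close>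

lemma add_two_power_le:
  assumes n: "2 \<le> n"
  shows "(n + 2) ^ n \<le> n ^ (n + 3)"
proof (cases "n = 2")
  case False
  have rn: "real n > 0" using n by simp
  have "exp (2::real) \<le> 3 ^ 2"
    using power_mono[OF exp_le, of 2] exp_of_nat_mult[of 2 "1::real"] by simp
  also have "\<dots> \<le> real n ^ 3"
    using n False by (intro order_trans[OF _ power_mono[of 3 "real n" 3]]) simp_all
  finally have e2: "exp 2 \<le> real n ^ 3" .
  have "(1 + 2 / real n) ^ n \<le> exp (2 / real n) ^ n"
    by (rule power_mono[OF exp_ge_add_one_self]) (use rn in simp)
  also have "\<dots> = exp 2"
    using rn by (simp add: exp_of_nat_mult[symmetric])
  finally have bernoulli: "(1 + 2 / real n) ^ n \<le> exp 2" .
  have "real ((n + 2) ^ n) = real n ^ n * (1 + 2 / real n) ^ n"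
    using rn by (simp add: power_mult_distrib[symmetric] field_simps)
  also have "\<dots> \<le> real n ^ n * real n ^ 3"
    using bernoulli e2 by (intro mult_left_mono) simp_all
  also have "\<dots> = real (n ^ (n + 3))" by (simp add: power_add)
  finally show ?thesis by (simp only: of_nat_le_iff)
qed simp

lemma upd_bound_funpow_le_power:
  assumes n: "2 \<le> n" and p: "p \<le> n"
  shows "(upd_bound p n ^^ (n * (k + 1))) 0 \<le> n ^ ((n + 3) * (k + 2))"
proof -
  have "(upd_bound p n ^^ (n * (k + 1))) 0 \<le> (p + 2) ^ (n * (k + 1)) * (n + 1)"
    using upd_bound_funpow_le[where j = "n * (k + 1)" and p = p and n = n] by linarith
  also have "\<dots> \<le> (n + 2) ^ (n * (k + 1)) * (n + 1)"
    using p by (intro mult_right_mono power_mono) simp_all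
  also have "\<dots> = ((n + 2) ^ n) ^ (k + 1) * (n + 1)"
    by (simp only: power_mult)
  also have "\<dots> \<le> (n ^ (n + 3)) ^ (k + 1) * n ^ (n + 3)"
  proof (intro mult_mono power_mono add_two_power_le[OF n])
    have "2 * n \<le> n * n" by (rule mult_right_mono[OF n]) simp
    then have "n + 1 \<le> n ^ 2" using n unfolding power2_eq_square by linarith
    also have "\<dots> \<le> n ^ (n + 3)" using n by (intro power_increasing) simp_all
    finally show "n + 1 \<le> n ^ (n + 3)" .
  qed simp_all
  also have "\<dots> = n ^ ((n + 3) * (k + 2))"
    by (simp flip: power_mult power_add add: algebra_simps)
  finally show ?thesis .
qed

section \<open>The labelings \<open>\<lambda>\<^sup>k\<close>\<close>

lemma lam_label_bound:
  assumes ar: "arena G" and "I \<subseteq> Ps G" "v \<in> Vs G" "lam G v0 J t (v, I) = enat m"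
  shows "m \<le> card (Vs G) ^ ((card (Vs G) + 3) * (card (Ps G - I) + 2))"
proof -
  have l0: "lam G v0 J 0 = lam0 G" by (simp add: lam_def)
  have lS: "lam G v0 J (Suc t) = upd G (lam G v0 J t) (Vge G v0 J (snd (lamseq G v0 J t)))" for t
    by (simp add: lam_def Let_def)
  have "m \<le> (upd_bound (card (Ps G)) (card (Vs G)) ^^ (card (Vs G) * (card (Ps G - I) + 1))) 0"
    by (rule label_bound[OF ar l0 lS assms(2-4)])
  also have "\<dots> \<le> card (Vs G) ^ ((card (Vs G) + 3) * (card (Ps G - I) + 2))"
    using ar by (intro upd_bound_funpow_le_power) (simp_all add: arena_def)
  finally show ?thesis .
qed

lemma mR_le:
  assumes bounded: "\<And>m. enat m \<in> S \<Longrightarrow> m \<le> B"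
  shows "mR S \<le> B"
proof (cases "\<exists>n. enat n \<in> S")
  case True
  have "finite {n. enat n \<in> S}"
    by (rule finite_subset[of _ "{..B}"]) (use bounded in auto)
  then have "Max {n. enat n \<in> S} \<le> B"
    using True bounded by (subst Max_le_iff) auto
  then show ?thesis using True by (simp add: mR_def)
qed (simp add: mR_def)

lemma mR_lam_le:
  assumes ar: "arena G" and A: "A \<subseteq> Vs G \<times> Pow (Ps G)"
    and k: "\<And>v I. (v, I) \<in> A \<Longrightarrow> card (Ps G - I) \<le> k"
  shows "real (mR (lam G v0 J t ` A)) \<le> real (card (Vs G)) ^ ((card (Vs G) + 3) * (k + 2))"
proof -
  have "mR (lam G v0 J t ` A) \<le> card (Vs G) ^ ((card (Vs G) + 3) * (k + 2))"
  proof (rule mR_le)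
    fix m assume "enat m \<in> lam G v0 J t ` A"
    then obtain v I where vI: "(v, I) \<in> A" "lam G v0 J t (v, I) = enat m" by auto
    have "I \<subseteq> Ps G" "v \<in> Vs G" using A vI(1) by auto
    then have "m \<le> card (Vs G) ^ ((card (Vs G) + 3) * (card (Ps G - I) + 2))"
      using vI(2) by (rule lam_label_bound[OF ar])
    also have "\<dots> \<le> card (Vs G) ^ ((card (Vs G) + 3) * (k + 2))"
      by (rule power_increasing) (use ar k[OF vI(1)] in \<open>simp_all add: arena_def\<close>)
    finally show "m \<le> card (Vs G) ^ ((card (Vs G) + 3) * (k + 2))" .
  qed
  then show ?thesis by (simp only: of_nat_le_iff of_nat_power[symmetric])
qed

lemma order_ok_region_subset:
  assumes "order_ok G v0 J" and "l \<in> {1..Nreg G v0}"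
  shows "J l \<subseteq> Ps G"
proof -
  have "J l \<in> Iset G v0" using assms by (auto simp: order_ok_def bij_betw_def)
  then obtain u where "(x0 G v0, u) \<in> (XE G)\<^sup>*" "J l = snd u" by (auto simp: Iset_def)
  then show ?thesis using reachable_snd_subset by blast
qed

theorem theorem3p10:
  shows "\<exists>C::real. \<forall>G v0 J. arena G \<and> v0 \<in> Vs G \<and> order_ok G v0 J \<longrightarrow>
     (\<forall>l\<in>{1..Nreg G v0}.
        real (mR (lam G v0 J (kstar G v0 J l) ` VJ G J l))
          \<le> C * real (card (Vs G)) ^ ((card (Vs G) + 3) * (card (Ps G - J l) + 2))
      \<and> real (mR (lam G v0 J (kstar G v0 J l) ` Vge G v0 J l))
          \<le> C * real (card (Vs G)) ^ ((card (Vs G) + 3) * (card (Ps G) + 2)))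
     \<and> real (mR (lam G v0 J (kstar G v0 J 1) ` XV G))
          \<le> C * real (card (Vs G)) ^ ((card (Vs G) + 3) * (card (Ps G) + 2))"
proof (intro exI[of _ 1] allI impI conjI ballI; unfold mult_1; elim conjE)
  fix G v0 J l
  assume ar: "arena G" and ord: "order_ok G v0 J" and l: "l \<in> {1..Nreg G v0}"
  have card_Diff: "card (Ps G - I) \<le> card (Ps G)" for I
    using ar by (intro card_mono) (simp_all add: arena_def)
  show "real (mR (lam G v0 J (kstar G v0 J l) ` VJ G J l))
      \<le> real (card (Vs G)) ^ ((card (Vs G) + 3) * (card (Ps G - J l) + 2))"
    using ar order_ok_region_subset[OF ord l] by (intro mR_lam_le) (auto simp: VJ_def)
  show "real (mR (lam G v0 J (kstar G v0 J l) ` Vge G v0 J l))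
      \<le> real (card (Vs G)) ^ ((card (Vs G) + 3) * (card (Ps G) + 2))"
  proof (intro mR_lam_le[OF ar])
    have "J k \<subseteq> Ps G" if "k \<in> {l..Nreg G v0}" for k
      using l that by (intro order_ok_region_subset[OF ord]) auto
    then show "Vge G v0 J l \<subseteq> Vs G \<times> Pow (Ps G)" unfolding Vge_def VJ_def by blast
  qed (rule card_Diff)
next
  fix G v0 J
  assume "arena G"
  then show "real (mR (lam G v0 J (kstar G v0 J 1) ` XV G))
      \<le> real (card (Vs G)) ^ ((card (Vs G) + 3) * (card (Ps G) + 2))"
    by (intro mR_lam_le) (auto simp: XV_def arena_def intro: card_mono)
qed

end
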